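(* Let $\mathcal{G}$ be a strongly connected digraph with $N$ nodes and consider the distributed quantized weight-balancing algorithm described in the context, with step-size $\gamma(k)=2^{-n}$ for $2^n-1\le k\le 2^{n+1}-2$. If $\Vert\boldsymbol{\epsilon}(k)\Vert_1\ge 2N(N-1)\gamma(k)$, then $\Vert\boldsymbol{\epsilon}(k+N^{2N})\Vert_1\le\Vert\boldsymbol{\epsilon}(k)\Vert_1-2\gamma(k+N^{2N})$.
   Context: $\mathcal{G}=(\mathcal{V},\mathcal{E})$, $\mathcal{V}=\{1,\dots,N\}$, no self-loops; $\mathcal{N}_i^-=\{j:(j,i)\in\mathcal{E}\}$, $\mathcal{N}_i^+=\{j:(i,j)\in\mathcal{E}\}$, $d_i^+=|\mathcal{N}_i^+|$. Algorithm: $a_{ij}(0)=1$ if $j\in\mathcal{N}_i^-$ and $0$ otherwise; $b_i(k)=\sum_{j\in\mathcal{N}_i^-}a_{ij}(k)-\sum_{j\in\mathcal{N}_i^+}a_{ji}(k)$; $n_i(k)=1$ if $b_i(k)\ge d_i^+\gamma(k)$, else $0$; $a_{ij}(k+1)=a_{ij}(k)+n_j(k)\gamma(k)$ for $j\in\mathcal{N}_i^-$. $\boldsymbol{\epsilon}(k)=(|b_i(k)|)_{i=1}^N$. *)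

theory Defs
  imports Complex_Main
begin

definition in_nbrs :: "(nat \<times> nat) set \<Rightarrow> nat \<Rightarrow> nat set" where
  "in_nbrs E i = {j. (j, i) \<in> E}"

definition out_nbrs :: "(nat \<times> nat) set \<Rightarrow> nat \<Rightarrow> nat set" where
  "out_nbrs E i = {j. (i, j) \<in> E}"

definition out_deg :: "(nat \<times> nat) set \<Rightarrow> nat \<Rightarrow> nat" where
  "out_deg E i = card (out_nbrs E i)"

definition strongly_connected :: "nat \<Rightarrow> (nat \<times> nat) set \<Rightarrow> bool" where
  "strongly_connected N E \<longleftrightarrow> (\<forall>i\<in>{1..N}. \<forall>j\<in>{1..N}. (i, j) \<in> E\<^sup>*)"

definition gamma :: "nat \<Rightarrow> real" where
  "gamma k = (1 / 2) ^ (THE n::nat. 2 ^ n - 1 \<le> k \<and> k \<le> 2 ^ (n + 1) - 2)"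

text \<open>Imbalance b_i for a weight assignment a (a i j is the weight on arc (j,i)).\<close>
definition imbalance :: "(nat \<times> nat) set \<Rightarrow> (nat \<Rightarrow> nat \<Rightarrow> real) \<Rightarrow> nat \<Rightarrow> real" where
  "imbalance E a i = (\<Sum>j\<in>in_nbrs E i. a i j) - (\<Sum>j\<in>out_nbrs E i. a j i)"

definition flag :: "(nat \<times> nat) set \<Rightarrow> (nat \<Rightarrow> nat \<Rightarrow> real) \<Rightarrow> nat \<Rightarrow> nat \<Rightarrow> real" where
  "flag E a i k = (if imbalance E a i \<ge> real (out_deg E i) * gamma k then 1 else 0)"

primrec wts :: "(nat \<times> nat) set \<Rightarrow> nat \<Rightarrow> nat \<Rightarrow> nat \<Rightarrow> real" where
  "wts E 0 = (\<lambda>i j. if j \<in> in_nbrs E i then 1 else 0)"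
| "wts E (Suc k) = (\<lambda>i j. if j \<in> in_nbrs E i
       then wts E k i j + flag E (wts E k) j k * gamma k
       else wts E k i j)"

definition b :: "(nat \<times> nat) set \<Rightarrow> nat \<Rightarrow> nat \<Rightarrow> real" where
  "b E k i = imbalance E (wts E k) i"

definition eps_norm1 :: "nat \<Rightarrow> (nat \<times> nat) set \<Rightarrow> nat \<Rightarrow> real" where
  "eps_norm1 N E k = (\<Sum>i\<in>{1..N}. \<bar>b E k i\<bar>)"

end

theory Submission
  imports Defs "HOL-Library.Discrete_Functions"
begin

(* The imbalances always sum to zero, and in one step the weight a node sends out is exactly
   the weight its out-neighbours receive, so ||eps||_1 never increases; it drops by at least
   2 gamma whenever a node with negative imbalance receives weight, because imbalances lie on
   the grid gamma(t) Z and a negative one is therefore at most -gamma.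

   Suppose this does not happen during N^(2N) steps. Then negative imbalances are frozen and
   nonnegative ones stay nonnegative, so ||eps||_1 is constant and stays above 2N(N-1) gamma,
   which forces some node to fire at every step. A node i with nonnegative imbalance that fires
   F_i times can see firing in-neighbours in at most d_i (F_i + 1) steps, so F_u <= (N-1)(F_v + 1)
   along every arc u -> v, while deficit nodes never fire. Following arcs towards a deficit node
   bounds every F_u by N^(N-1): fewer than N^N firings in total, contradicting one per step. *)

lemma rtrancl_enters_set:
  "(x, w) \<in> R\<^sup>* \<Longrightarrow> w \<in> S \<Longrightarrow> x \<notin> S \<Longrightarrow> \<exists>u v. (u, v) \<in> R \<and> u \<notin> S \<and> v \<in> S"
proof (induction rule: converse_rtrancl_induct)
  case (step y z)
  then show ?case by (cases "z \<in> S") auto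
qed simp

lemma bounded_growth_layers:
  fixes f :: "'a \<Rightarrow> nat"
  assumes "finite V" "R \<subseteq> V \<times> V" "w \<in> V" "f w = 0"
    and reach: "\<And>x. x \<in> V \<Longrightarrow> (x, w) \<in> R\<^sup>*"
    and arc: "\<And>u v. (u, v) \<in> R \<Longrightarrow> f u \<le> c * (f v + 1)"
  shows "\<exists>S\<subseteq>V. w \<in> S \<and> (S = V \<or> j < card S) \<and> (\<forall>x\<in>S. f x < (c + 1) ^ j)"
proof (induction j)
  case 0
  show ?case using assms(3,4) by (intro exI[of _ "{w}"]) auto
next
  case (Suc j)
  then obtain S where S: "S \<subseteq> V" "w \<in> S" "S = V \<or> j < card S" "\<forall>x\<in>S. f x < (c + 1) ^ j"
    by blast
  have "(c + 1) ^ j \<le> (c + 1) ^ Suc j" by simp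
  then have S_bound: "\<forall>x\<in>S. f x < (c + 1) ^ Suc j" using S(4) order.strict_trans2 by blast
  show ?case
  proof (cases "S = V")
    case True
    then show ?thesis using S(1,2) S_bound by blast
  next
    case False
    then obtain x where "x \<in> V" "x \<notin> S" using S(1) by blast
    then obtain u v where uv: "(u, v) \<in> R" "u \<notin> S" "v \<in> S"
      using rtrancl_enters_set[OF reach S(2)] by blast
    have "f v + 1 \<le> (c + 1) ^ j" using S(4) uv(3) by (simp add: Suc_le_eq)
    then have "f u \<le> c * (c + 1) ^ j" using arc[OF uv(1)] by (meson le_trans mult_le_mono2)
    moreover have "0 < (c + 1) ^ j" "(c + 1) ^ Suc j = (c + 1) ^ j + c * (c + 1) ^ j" by simp_all
    ultimately have "f u < (c + 1) ^ Suc j" by linarith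
    then have "\<forall>x\<in>insert u S. f x < (c + 1) ^ Suc j" using S_bound by blast
    moreover have "card (insert u S) = Suc (card S)"
      using uv(2) finite_subset[OF S(1) assms(1)] by simp
    then have "Suc j < card (insert u S)" using S(3) False by simp
    moreover have "insert u S \<subseteq> V" using uv(1) assms(2) S(1) by blast
    ultimately show ?thesis using S(2) by blast
  qed
qed

lemma bounded_growth_towards_root:
  fixes f :: "'a \<Rightarrow> nat"
  assumes "finite V" "R \<subseteq> V \<times> V" "w \<in> V" "f w = 0"
    and "\<And>x. x \<in> V \<Longrightarrow> (x, w) \<in> R\<^sup>*"
    and "\<And>u v. (u, v) \<in> R \<Longrightarrow> f u \<le> c * (f v + 1)"
  shows "\<forall>x\<in>V. f x < (c + 1) ^ (card V - 1)"
proof -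
  have "\<exists>S\<subseteq>V. w \<in> S \<and> (S = V \<or> card V - 1 < card S) \<and> (\<forall>x\<in>S. f x < (c + 1) ^ (card V - 1))"
    using assms by (rule bounded_growth_layers)
  then obtain S where
    S: "S \<subseteq> V" "S = V \<or> card V - 1 < card S" "\<forall>x\<in>S. f x < (c + 1) ^ (card V - 1)"
    by (elim exE conjE)
  have "S = V"
  proof (rule card_subset_eq[OF assms(1) S(1)])
    show "card S = card V"
      using S(2) card_mono[OF assms(1) S(1)] by auto
  qed
  then show ?thesis using S(3) by blast
qed

definition count_steps :: "(nat \<Rightarrow> bool) \<Rightarrow> nat \<Rightarrow> nat \<Rightarrow> nat" where
  "count_steps P k t = card {s \<in> {k..<t}. P s}"

lemma count_steps_Suc: "k \<le> t \<Longrightarrow> count_steps P k (Suc t) = count_steps P k t + of_bool (P t)"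
proof -
  assume "k \<le> t"
  then have "{s \<in> {k..<Suc t}. P s} = {s \<in> {k..<t}. P s} \<union> (if P t then {t} else {})"
    by (auto simp: less_Suc_eq)
  then show ?thesis by (simp add: count_steps_def)
qed

lemma count_steps_mono:
  "(\<And>s. k \<le> s \<Longrightarrow> s < t \<Longrightarrow> P s \<Longrightarrow> Q s) \<Longrightarrow> count_steps P k t \<le> count_steps Q k t"
  unfolding count_steps_def by (rule card_mono) auto

lemma count_steps_eq_0: "(\<And>s. k \<le> s \<Longrightarrow> s < t \<Longrightarrow> \<not> P s) \<Longrightarrow> count_steps P k t = 0"
  by (simp add: count_steps_def)

lemma count_steps_all: "(\<And>s. k \<le> s \<Longrightarrow> s < t \<Longrightarrow> P s) \<Longrightarrow> count_steps P k t = t - k"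
proof -
  assume "\<And>s. k \<le> s \<Longrightarrow> s < t \<Longrightarrow> P s"
  then have "{s \<in> {k..<t}. P s} = {k..<t}" by auto
  then show ?thesis by (simp add: count_steps_def)
qed

lemma count_steps_ex_le_sum:
  "finite U \<Longrightarrow> count_steps (\<lambda>s. \<exists>u\<in>U. P u s) k t \<le> (\<Sum>u\<in>U. count_steps (P u) k t)"
proof -
  assume "finite U"
  moreover have "{s \<in> {k..<t}. \<exists>u\<in>U. P u s} = (\<Union>u\<in>U. {s \<in> {k..<t}. P u s})" by auto
  ultimately show ?thesis unfolding count_steps_def by (simp add: card_UN_le)
qed

lemma mult_le_if_factor_shrinks:
  fixes x y g g' :: real
  assumes "x * g \<le> y" "0 \<le> y" "0 \<le> g'" "g' \<le> g"
  shows "x * g' \<le> y"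
proof (cases "0 \<le> x")
  case True
  then show ?thesis using assms mult_left_mono[of g' g x] by linarith
next
  case False
  then show ?thesis using assms mult_nonpos_nonneg[of x g'] by linarith
qed

lemma gamma_floor_log: "gamma t = (1 / 2) ^ floor_log (Suc t)"
proof -
  have "(THE n::nat. 2 ^ n - 1 \<le> t \<and> t \<le> 2 ^ (n + 1) - 2) = floor_log (Suc t)"
  proof (rule the_equality)
    show "2 ^ floor_log (Suc t) - 1 \<le> t \<and> t \<le> 2 ^ (floor_log (Suc t) + 1) - 2"
      using floor_log_exp2_le[of "Suc t"] floor_log_exp2_gt[of "Suc t"] by (simp, linarith)
  next
    fix n assume "2 ^ n - 1 \<le> t \<and> t \<le> 2 ^ (n + 1) - (2::nat)"
    moreover have "(2::nat) ^ (n + 1) = 2 * 2 ^ n" by simp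
    ultimately have "2 ^ n \<le> Suc t" "Suc t < 2 * 2 ^ n"
      using one_le_power[of "2::nat" n] by linarith+
    then show "n = floor_log (Suc t)" by (simp add: floor_log_eqI)
  qed
  then show ?thesis by (simp add: gamma_def)
qed

lemma gamma_pos: "0 < gamma t"
  by (simp add: gamma_floor_log)

lemma gamma_antimono: "s \<le> t \<Longrightarrow> gamma t \<le> gamma s"
  by (simp add: gamma_floor_log power_decreasing floor_log_le_iff)

lemma gamma_ratio_Ints: "s \<le> t \<Longrightarrow> gamma s / gamma t \<in> \<int>"
proof -
  assume "s \<le> t"
  then have le: "floor_log (Suc s) \<le> floor_log (Suc t)" by (simp add: floor_log_le_iff)
  have "gamma s / gamma t = 2 ^ (floor_log (Suc t) - floor_log (Suc s))"
    using le by (simp add: gamma_floor_log power_one_over power_diff)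
  then show ?thesis by simp
qed

definition fires :: "(nat \<times> nat) set \<Rightarrow> nat \<Rightarrow> nat \<Rightarrow> bool" where
  "fires E t j \<longleftrightarrow> real (out_deg E j) * gamma t \<le> b E t j"

lemma flag_wts: "flag E (wts E t) j t = of_bool (fires E t j)"
  by (simp add: flag_def fires_def b_def)

lemma wts_grid: "wts E t i j / gamma t \<in> \<int>"
proof (induction t arbitrary: i j)
  case 0
  then show ?case by (simp add: gamma_floor_log)
next
  case (Suc t)
  have split: "wts E (Suc t) i j / gamma (Suc t)
      = (wts E t i j / gamma t + of_bool (j \<in> in_nbrs E i \<and> fires E t j)) * (gamma t / gamma (Suc t))"
    using gamma_pos[of t] gamma_pos[of "Suc t"] by (simp add: flag_wts field_simps)
  have "(wts E t i j / gamma t + of_bool (j \<in> in_nbrs E i \<and> fires E t j)) * (gamma t / gamma (Suc t)) \<in> \<int>"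
    using Suc gamma_ratio_Ints[of t "Suc t"] by (intro Ints_mult Ints_add) auto
  then show ?case unfolding split .
qed

lemma b_grid: "b E t i / gamma t \<in> \<int>"
  using wts_grid by (simp add: b_def imbalance_def diff_divide_distrib sum_divide_distrib Ints_sum)

lemma b_neg_le: "b E t i < 0 \<Longrightarrow> b E t i \<le> - gamma t"
proof -
  assume neg: "b E t i < 0"
  obtain z :: int where z: "b E t i / gamma t = of_int z" using b_grid Ints_cases by metis
  have "b E t i = of_int z * gamma t" using z gamma_pos[of t] by (simp add: field_simps)
  moreover from this have "z \<le> -1" using neg gamma_pos[of t] by (simp add: mult_less_0_iff)
  ultimately show ?thesis using mult_right_mono[of "of_int z" "-1" "gamma t"] gamma_pos[of t] by simp
qed

definition deficit_fed :: "(nat \<times> nat) set \<Rightarrow> nat \<Rightarrow> nat \<Rightarrow> bool" where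
  "deficit_fed E t i \<longleftrightarrow> b E t i < 0 \<and> (\<exists>j\<in>in_nbrs E i. fires E t j)"

locale digraph_on_nodes =
  fixes N :: nat and E :: "(nat \<times> nat) set"
  assumes arcs_in_nodes: "E \<subseteq> {1..N} \<times> {1..N}"
begin

lemma finite_in_nbrs: "finite (in_nbrs E i)"
  by (rule finite_subset[of _ "{1..N}"]) (use arcs_in_nodes in \<open>auto simp: in_nbrs_def\<close>)

lemma finite_out_nbrs: "finite (out_nbrs E i)"
  by (rule finite_subset[of _ "{1..N}"]) (use arcs_in_nodes in \<open>auto simp: out_nbrs_def\<close>)

lemma sum_in_nbrs_swap:
  "(\<Sum>i\<in>{1..N}. \<Sum>j\<in>in_nbrs E i. g i j) = (\<Sum>j\<in>{1..N}. \<Sum>i\<in>out_nbrs E j. g i j)"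
proof -
  have "(\<Sum>i\<in>{1..N}. \<Sum>j\<in>in_nbrs E i. g i j) = (\<Sum>i\<in>{1..N}. \<Sum>j\<in>{j\<in>{1..N}. (j, i) \<in> E}. g i j)"
    using arcs_in_nodes by (intro sum.cong) (auto simp: in_nbrs_def)
  also have "\<dots> = (\<Sum>j\<in>{1..N}. \<Sum>i\<in>{i\<in>{1..N}. (j, i) \<in> E}. g i j)"
    by (rule sum.swap_restrict) auto
  also have "\<dots> = (\<Sum>j\<in>{1..N}. \<Sum>i\<in>out_nbrs E j. g i j)"
    using arcs_in_nodes by (intro sum.cong) (auto simp: out_nbrs_def)
  finally show ?thesis .
qed

lemma sum_b_eq_0: "(\<Sum>i\<in>{1..N}. b E t i) = 0"
  using sum_in_nbrs_swap[of "\<lambda>i j. wts E t i j"] by (simp add: b_def imbalance_def sum_subtractf)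

lemma b_Suc:
  "b E (Suc t) i = b E t i + gamma t * card {j \<in> in_nbrs E i. fires E t j}
     - (if fires E t i then real (out_deg E i) * gamma t else 0)"
proof -
  have "(\<Sum>j\<in>in_nbrs E i. wts E (Suc t) i j)
      = (\<Sum>j\<in>in_nbrs E i. wts E t i j) + gamma t * (\<Sum>j\<in>in_nbrs E i. of_bool (fires E t j))"
    by (simp add: flag_wts sum.distrib sum_distrib_left mult.commute)
  moreover have "(\<Sum>j\<in>out_nbrs E i. wts E (Suc t) j i)
      = (\<Sum>j\<in>out_nbrs E i. wts E t j i) + (if fires E t i then real (out_deg E i) * gamma t else 0)"
    by (simp add: flag_wts sum.distrib out_deg_def in_nbrs_def out_nbrs_def)
  ultimately show ?thesis
    using finite_in_nbrs by (simp add: b_def imbalance_def Collect_conj_eq Int_commute)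
qed

lemma sum_card_in_nbrs:
  "(\<Sum>i\<in>{1..N}. real (card {j \<in> in_nbrs E i. P j}))
     = (\<Sum>j\<in>{1..N}. if P j then real (out_deg E j) else 0)"
  using sum_in_nbrs_swap[of "\<lambda>i j. of_bool (P j) :: real"] finite_in_nbrs
  by (simp add: Collect_conj_eq Int_commute out_deg_def sum.If_cases)

lemma abs_b_Suc_le:
  "\<bar>b E (Suc t) i\<bar> \<le> \<bar>b E t i\<bar> + gamma t * card {j \<in> in_nbrs E i. fires E t j}
     - (if fires E t i then real (out_deg E i) * gamma t else 0)
     - (if deficit_fed E t i then 2 * gamma t else 0)"
proof -
  let ?inflow = "gamma t * card {j \<in> in_nbrs E i. fires E t j}"
  have g: "0 < gamma t" by (rule gamma_pos)
  then have inflow_nonneg: "0 \<le> ?inflow" by simp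
  show ?thesis
  proof (cases "fires E t i")
    case True
    then have "0 \<le> real (out_deg E i) * gamma t" "real (out_deg E i) * gamma t \<le> b E t i"
      using g by (simp_all add: fires_def)
    then show ?thesis using True inflow_nonneg by (simp add: b_Suc deficit_fed_def)
  next
    case not_fires: False
    show ?thesis
    proof (cases "deficit_fed E t i")
      case True
      then have "b E t i \<le> - gamma t" by (simp add: deficit_fed_def b_neg_le)
      moreover have "gamma t \<le> ?inflow"
        using True g finite_in_nbrs by (auto simp: deficit_fed_def Suc_le_eq card_gt_0_iff)
      ultimately show ?thesis using True not_fires g by (simp add: b_Suc abs_le_iff abs_of_neg)
    next
      case False
      then show ?thesis
        using not_fires inflow_nonneg abs_triangle_ineq[of "b E t i" ?inflow] by (simp add: b_Suc)
    qed
  qed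
qed

lemma eps_norm1_Suc_le:
  "eps_norm1 N E (Suc t) \<le> eps_norm1 N E t - 2 * gamma t * card {i \<in> {1..N}. deficit_fed E t i}"
proof -
  let ?r = "\<lambda>i. real (card {j \<in> in_nbrs E i. fires E t j})"
  let ?out = "\<lambda>i. if fires E t i then real (out_deg E i) * gamma t else 0"
  let ?fed = "\<lambda>i. if deficit_fed E t i then 2 * gamma t else 0"
  have "eps_norm1 N E (Suc t) \<le> (\<Sum>i\<in>{1..N}. \<bar>b E t i\<bar> + gamma t * ?r i - ?out i - ?fed i)"
    unfolding eps_norm1_def by (intro sum_mono abs_b_Suc_le)
  also have "\<dots> = eps_norm1 N E t + gamma t * (\<Sum>i\<in>{1..N}. ?r i)
      - (\<Sum>i\<in>{1..N}. ?out i) - (\<Sum>i\<in>{1..N}. ?fed i)"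
    by (simp only: eps_norm1_def sum.distrib sum_subtractf sum_distrib_left)
  also have "(\<Sum>i\<in>{1..N}. ?out i) = gamma t * (\<Sum>i\<in>{1..N}. ?r i)"
    unfolding sum_card_in_nbrs sum_distrib_left by (intro sum.cong) auto
  also have "(\<Sum>i\<in>{1..N}. ?fed i) = 2 * gamma t * card {i \<in> {1..N}. deficit_fed E t i}"
    by (simp add: sum.If_cases Int_def)
  finally show ?thesis by simp
qed

lemma eps_norm1_antimono: "s \<le> t \<Longrightarrow> eps_norm1 N E t \<le> eps_norm1 N E s"
proof (induction t rule: dec_induct)
  case (step t)
  have "0 \<le> 2 * gamma t * card {i \<in> {1..N}. deficit_fed E t i}" using gamma_pos[of t] by simp
  then show ?case using step.IH eps_norm1_Suc_le[of t] by linarith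
qed simp

lemma eps_norm1_eq_pos_part: "eps_norm1 N E t = 2 * (\<Sum>i\<in>{1..N}. max 0 (b E t i))"
proof -
  have "\<bar>x\<bar> = 2 * max 0 x - x" for x :: real by auto
  then show ?thesis using sum_b_eq_0[of t] by (simp add: eps_norm1_def sum_subtractf sum_distrib_left)
qed

lemma eps_norm1_eq_neg_part: "eps_norm1 N E t = - 2 * (\<Sum>i\<in>{1..N}. min 0 (b E t i))"
proof -
  have "\<bar>x\<bar> = x - 2 * min 0 x" for x :: real by auto
  then show ?thesis using sum_b_eq_0[of t] by (simp add: eps_norm1_def sum_subtractf sum_distrib_left sum_negf)
qed

lemma exists_neg_b:
  assumes "0 < eps_norm1 N E t"
  shows "\<exists>i\<in>{1..N}. b E t i < 0"
proof (rule ccontr)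
  assume "\<not> (\<exists>i\<in>{1..N}. b E t i < 0)"
  then have "eps_norm1 N E t = 0" unfolding eps_norm1_eq_neg_part by (simp add: not_less)
  then show False using assms by simp
qed

lemma b_Suc_nonneg:
  assumes "0 \<le> b E t i"
  shows "0 \<le> b E (Suc t) i"
proof -
  have "0 \<le> gamma t * card {j \<in> in_nbrs E i. fires E t j}" using gamma_pos[of t] by simp
  then show ?thesis using assms by (simp add: b_Suc fires_def[of E t i])
qed

lemma b_nonneg_persists: "k \<le> t \<Longrightarrow> 0 \<le> b E k i \<Longrightarrow> 0 \<le> b E t i"
  by (induction t rule: dec_induct) (auto intro: b_Suc_nonneg)

lemma not_fires_if_neg:
  assumes "b E t i < 0"
  shows "\<not> fires E t i"
proof -
  have "0 \<le> real (out_deg E i) * gamma t" using gamma_pos[of t] by simp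
  then show ?thesis using assms by (simp add: fires_def)
qed

lemma b_Suc_unfed_deficit:
  assumes "b E t i < 0" "\<not> deficit_fed E t i"
  shows "b E (Suc t) i = b E t i"
proof -
  have "\<not> fires E t i" using assms(1) by (rule not_fires_if_neg)
  moreover have "{j \<in> in_nbrs E i. fires E t j} = {}" using assms by (auto simp: deficit_fed_def)
  then have "card {j \<in> in_nbrs E i. fires E t j} = 0" by (simp only: card.empty)
  ultimately show ?thesis by (simp add: b_Suc)
qed

lemma deficit_frozen:
  assumes "\<forall>s\<in>{k..<t}. \<forall>i\<in>{1..N}. \<not> deficit_fed E s i" "i \<in> {1..N}" "b E k i < 0" "k \<le> t"
  shows "b E t i = b E k i"
  using assms(4,1)
proof (induction t rule: dec_induct)
  case (step t)
  then show ?case using b_Suc_unfed_deficit[of t i] assms(2,3) by simp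
qed simp

lemma b_Suc_ge_potential:
  assumes "x * gamma t \<le> b E t i" "0 \<le> b E (Suc t) i"
  shows "(x + of_bool (\<exists>j\<in>in_nbrs E i. fires E t j) - of_bool (fires E t i) * real (out_deg E i))
           * gamma (Suc t) \<le> b E (Suc t) i"
proof -
  let ?fed = "of_bool (\<exists>j\<in>in_nbrs E i. fires E t j) :: real"
  have "?fed \<le> real (card {j \<in> in_nbrs E i. fires E t j})"
    using finite_in_nbrs by (auto simp: Suc_le_eq card_gt_0_iff)
  then have "gamma t * ?fed \<le> gamma t * card {j \<in> in_nbrs E i. fires E t j}"
    using gamma_pos[of t] by (intro mult_left_mono) auto
  moreover have "(x + ?fed - of_bool (fires E t i) * real (out_deg E i)) * gamma t
      = x * gamma t + gamma t * ?fed - (if fires E t i then real (out_deg E i) * gamma t else 0)"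
    by (simp add: algebra_simps)
  ultimately have "(x + ?fed - of_bool (fires E t i) * real (out_deg E i)) * gamma t \<le> b E (Suc t) i"
    using assms(1) unfolding b_Suc by linarith
  then show ?thesis
    by (rule mult_le_if_factor_shrinks[OF _ assms(2) less_imp_le[OF gamma_pos] gamma_antimono]) simp
qed

lemma inflow_count_le:
  assumes "1 \<le> out_deg E i" "k \<le> t" "0 \<le> b E k i"
  shows "count_steps (\<lambda>s. \<exists>j\<in>in_nbrs E i. fires E s j) k t
           \<le> out_deg E i * (count_steps (\<lambda>s. fires E s i) k t + 1)"
proof -
  define d where "d = out_deg E i"
  define C where "C t = count_steps (\<lambda>s. \<exists>j\<in>in_nbrs E i. fires E s j) k t" for t
  define F where "F t = count_steps (\<lambda>s. fires E s i) k t" for t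
  have "(real (C t) - real d * real (F t)) * gamma t \<le> b E t i \<and> C t \<le> d * F t + d"
    using assms(2)
  proof (induction t rule: dec_induct)
    case base
    then show ?case using assms(3) by (simp add: C_def F_def count_steps_def)
  next
    case (step t)
    from step.IH have inv: "(real (C t) - real d * real (F t)) * gamma t \<le> b E t i"
      and count: "C t \<le> d * F t + d" by blast+
    have C_Suc: "C (Suc t) = C t + of_bool (\<exists>j\<in>in_nbrs E i. fires E t j)"
      and F_Suc: "F (Suc t) = F t + of_bool (fires E t i)"
      using step.hyps by (simp_all add: C_def F_def count_steps_Suc)
    have "0 \<le> b E (Suc t) i" using b_nonneg_persists[of k "Suc t"] step.hyps assms(3) by simp
    from b_Suc_ge_potential[OF inv this]
    have "(real (C (Suc t)) - real d * real (F (Suc t))) * gamma (Suc t) \<le> b E (Suc t) i"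
      by (simp add: C_Suc F_Suc d_def algebra_simps)
    moreover have "C (Suc t) \<le> d * F (Suc t) + d"
    proof (cases "fires E t i")
      case True
      then show ?thesis using count assms(1) by (simp add: C_Suc F_Suc d_def)
    next
      case False
      then have "(real (C t) - real d * real (F t)) * gamma t < real d * gamma t"
        using inv by (simp add: fires_def d_def)
      then have "real (C t) - real d * real (F t) < real d"
        using gamma_pos[of t] by (simp only: mult_less_cancel_right_pos)
      then have "real (C t) < real (d * F t + d)" by simp
      then have "C t < d * F t + d" by (simp only: of_nat_less_iff)
      then show ?thesis using False by (simp add: C_Suc F_Suc)
    qed
    ultimately show ?case by blast
  qed
  then show ?thesis by (simp add: C_def F_def d_def algebra_simps)
qed

lemma eps_norm1_unfed_const:
  assumes "\<forall>s\<in>{k..<t}. \<forall>i\<in>{1..N}. \<not> deficit_fed E s i" "k \<le> t"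
  shows "eps_norm1 N E t = eps_norm1 N E k"
proof -
  have "min 0 (b E t i) = min 0 (b E k i)" if "i \<in> {1..N}" for i
  proof (cases "b E k i < 0")
    case True
    then show ?thesis using deficit_frozen[OF assms(1) that True assms(2)] by simp
  next
    case False
    then show ?thesis using b_nonneg_persists[OF assms(2)] by simp
  qed
  then show ?thesis unfolding eps_norm1_eq_neg_part by simp
qed

lemma unfed_deficit_counts:
  assumes "\<forall>s\<in>{k..<t}. \<forall>i\<in>{1..N}. \<not> deficit_fed E s i" "i \<in> {1..N}" "b E k i < 0"
  shows "count_steps (\<lambda>s. fires E s i) k t = 0"
    and "count_steps (\<lambda>s. \<exists>j\<in>in_nbrs E i. fires E s j) k t = 0"
proof -
  have neg: "b E s i < 0" and unfed: "\<not> deficit_fed E s i" if "k \<le> s" "s < t" for s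
    using deficit_frozen[of k s i] assms that by auto
  show "count_steps (\<lambda>s. fires E s i) k t = 0"
    using neg not_fires_if_neg by (intro count_steps_eq_0) blast
  show "count_steps (\<lambda>s. \<exists>j\<in>in_nbrs E i. fires E s j) k t = 0"
    using neg unfed by (intro count_steps_eq_0) (auto simp: deficit_fed_def)
qed

lemma eps_norm1_Suc_le_fed:
  assumes "i \<in> {1..N}" "deficit_fed E t i"
  shows "eps_norm1 N E (Suc t) \<le> eps_norm1 N E t - 2 * gamma t"
proof -
  have "1 \<le> card {i \<in> {1..N}. deficit_fed E t i}"
    using assms by (auto simp: Suc_le_eq card_gt_0_iff)
  then have "2 * gamma t \<le> 2 * gamma t * card {i \<in> {1..N}. deficit_fed E t i}"
    using gamma_pos[of t] by simp
  then show ?thesis using eps_norm1_Suc_le[of t] by linarith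
qed

end

locale strongly_connected_digraph = digraph_on_nodes +
  assumes two_le_N: "2 \<le> N"
    and loopless: "\<forall>i. (i, i) \<notin> E"
    and reachable: "strongly_connected N E"
begin

lemma out_deg_le: "i \<in> {1..N} \<Longrightarrow> out_deg E i \<le> N - 1"
proof -
  assume "i \<in> {1..N}"
  have "out_nbrs E i \<subseteq> {1..N} - {i}" using arcs_in_nodes loopless by (auto simp: out_nbrs_def)
  then have "out_deg E i \<le> card ({1..N} - {i})" unfolding out_deg_def by (intro card_mono) auto
  then show ?thesis using \<open>i \<in> {1..N}\<close> by simp
qed

lemma out_deg_pos: "i \<in> {1..N} \<Longrightarrow> 1 \<le> out_deg E i"
proof -
  assume i: "i \<in> {1..N}"
  define j where "j = (if i = 1 then 2 else 1 :: nat)"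
  have j: "j \<in> {1..N}" "j \<noteq> i" using two_le_N by (auto simp: j_def)
  then have "(i, j) \<in> E\<^sup>*" using reachable i by (simp add: strongly_connected_def)
  then obtain j' where "(i, j') \<in> E" using j(2) by (metis converse_rtranclE)
  then have "out_nbrs E i \<noteq> {}" by (auto simp: out_nbrs_def)
  then show ?thesis using finite_out_nbrs[of i] by (simp add: out_deg_def Suc_le_eq card_gt_0_iff)
qed

lemma eps_norm1_lt_if_quiet:
  assumes "\<forall>i\<in>{1..N}. \<not> fires E t i"
  shows "eps_norm1 N E t < 2 * real N * (real N - 1) * gamma t"
proof -
  have "max 0 (b E t i) < (real N - 1) * gamma t" if "i \<in> {1..N}" for i
  proof -
    have "b E t i < real (out_deg E i) * gamma t" using assms that by (simp add: fires_def not_le)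
    also have "\<dots> \<le> (real N - 1) * gamma t"
      using out_deg_le[OF that] two_le_N gamma_pos[of t] by (intro mult_right_mono) auto
    finally show ?thesis using two_le_N gamma_pos[of t] by simp
  qed
  then have "(\<Sum>i\<in>{1..N}. max 0 (b E t i)) < (\<Sum>i\<in>{1..N}. (real N - 1) * gamma t)"
    using two_le_N by (intro sum_strict_mono) auto
  then show ?thesis unfolding eps_norm1_eq_pos_part by simp
qed

lemma fire_count_arc_bound:
  assumes "\<forall>s\<in>{k..<t}. \<forall>i\<in>{1..N}. \<not> deficit_fed E s i" "k \<le> t" "(u, v) \<in> E"
  shows "count_steps (\<lambda>s. fires E s u) k t \<le> (N - 1) * (count_steps (\<lambda>s. fires E s v) k t + 1)"
proof -
  have v: "v \<in> {1..N}" using assms(3) arcs_in_nodes by auto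
  have "count_steps (\<lambda>s. fires E s u) k t \<le> count_steps (\<lambda>s. \<exists>j\<in>in_nbrs E v. fires E s j) k t"
    using assms(3) by (intro count_steps_mono) (auto simp: in_nbrs_def)
  also have "\<dots> \<le> (N - 1) * (count_steps (\<lambda>s. fires E s v) k t + 1)"
  proof (cases "b E k v < 0")
    case True
    then show ?thesis using unfed_deficit_counts(2)[OF assms(1) v] by simp
  next
    case False
    then have "count_steps (\<lambda>s. \<exists>j\<in>in_nbrs E v. fires E s j) k t
        \<le> out_deg E v * (count_steps (\<lambda>s. fires E s v) k t + 1)"
      using inflow_count_le[OF out_deg_pos[OF v] assms(2)] by simp
    also have "\<dots> \<le> (N - 1) * (count_steps (\<lambda>s. fires E s v) k t + 1)"
      using out_deg_le[OF v] by (rule mult_right_mono) simp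
    finally show ?thesis .
  qed
  finally show ?thesis .
qed

lemma node_fires_in_unfed_window:
  assumes "2 * real N * (real N - 1) * gamma k \<le> eps_norm1 N E k"
    and "\<forall>s\<in>{k..<t}. \<forall>i\<in>{1..N}. \<not> deficit_fed E s i" "k \<le> s" "s < t"
  shows "\<exists>u\<in>{1..N}. fires E s u"
proof (rule ccontr)
  assume "\<not> (\<exists>u\<in>{1..N}. fires E s u)"
  then have "eps_norm1 N E s < 2 * real N * (real N - 1) * gamma s"
    by (intro eps_norm1_lt_if_quiet) blast
  also have "\<dots> \<le> 2 * real N * (real N - 1) * gamma k"
    using two_le_N gamma_antimono[OF assms(3)] by (intro mult_left_mono) auto
  also have "\<dots> \<le> eps_norm1 N E s"
    using assms eps_norm1_unfed_const[of k s] by simp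
  finally show False by simp
qed

lemma deficit_fed_within:
  assumes "2 * real N * (real N - 1) * gamma k \<le> eps_norm1 N E k"
  shows "\<exists>t\<in>{k..<k + N ^ (2 * N)}. \<exists>i\<in>{1..N}. deficit_fed E t i"
proof (rule ccontr)
  define M where "M = N ^ (2 * N)"
  define F where "F u = count_steps (\<lambda>s. fires E s u) k (k + M)" for u
  assume "\<not> (\<exists>t\<in>{k..<k + N ^ (2 * N)}. \<exists>i\<in>{1..N}. deficit_fed E t i)"
  then have unfed: "\<forall>s\<in>{k..<k + M}. \<forall>i\<in>{1..N}. \<not> deficit_fed E s i" by (simp add: M_def)
  have "M = count_steps (\<lambda>s. \<exists>u\<in>{1..N}. fires E s u) k (k + M)"
    using node_fires_in_unfed_window[OF assms unfed] by (simp add: count_steps_all)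
  also have "\<dots> \<le> (\<Sum>u\<in>{1..N}. F u)"
    unfolding F_def by (rule count_steps_ex_le_sum) simp
  finally have many_firings: "M \<le> (\<Sum>u\<in>{1..N}. F u)" .
  have "0 < 2 * real N * (real N - 1) * gamma k" using two_le_N gamma_pos[of k] by simp
  then have "0 < eps_norm1 N E k" using assms by linarith
  then obtain w where w: "w \<in> {1..N}" "b E k w < 0" using exists_neg_b by blast
  have "\<forall>u\<in>{1..N}. F u < (N - 1 + 1) ^ (card {1..N} - 1)"
  proof (rule bounded_growth_towards_root[OF _ arcs_in_nodes w(1)])
    show "F w = 0" unfolding F_def using unfed_deficit_counts(1)[OF unfed w] .
    show "(x, w) \<in> E\<^sup>*" if "x \<in> {1..N}" for x
      using reachable that w(1) by (simp add: strongly_connected_def)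
    show "F u \<le> (N - 1) * (F v + 1)" if "(u, v) \<in> E" for u v
      unfolding F_def using fire_count_arc_bound[OF unfed _ that] by simp
  qed simp
  then have "(\<Sum>u\<in>{1..N}. F u) < (\<Sum>u\<in>{1..N}. N ^ (N - 1))"
    using two_le_N by (intro sum_strict_mono) auto
  also have "\<dots> = N ^ N" using two_le_N by (simp flip: power_Suc)
  also have "\<dots> \<le> M" unfolding M_def using two_le_N by (intro power_increasing) auto
  finally show False using many_firings by simp
qed

end

theorem proposition2:
  fixes N :: nat and E :: "(nat \<times> nat) set" and k :: nat
  assumes "N \<ge> 2"
    and "E \<subseteq> {1..N} \<times> {1..N}"
    and "\<forall>i. (i, i) \<notin> E"
    and "strongly_connected N E"
    and "eps_norm1 N E k \<ge> 2 * real N * (real N - 1) * gamma k"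
  shows "eps_norm1 N E (k + N ^ (2 * N)) \<le> eps_norm1 N E k - 2 * gamma (k + N ^ (2 * N))"
proof -
  interpret strongly_connected_digraph N E
    using assms(1-4) by unfold_locales
  obtain t i where t: "k \<le> t" "t < k + N ^ (2 * N)" and i: "i \<in> {1..N}" "deficit_fed E t i"
    using deficit_fed_within[OF assms(5)] by auto
  have "eps_norm1 N E (k + N ^ (2 * N)) \<le> eps_norm1 N E (Suc t)"
    using t(2) by (intro eps_norm1_antimono) simp
  also have "\<dots> \<le> eps_norm1 N E t - 2 * gamma t"
    using i by (rule eps_norm1_Suc_le_fed)
  also have "\<dots> \<le> eps_norm1 N E k - 2 * gamma t"
    using eps_norm1_antimono[OF t(1)] by simp
  also have "\<dots> \<le> eps_norm1 N E k - 2 * gamma (k + N ^ (2 * N))"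
    using gamma_antimono[of t "k + N ^ (2 * N)"] t(2) by simp
  finally show ?thesis .
qed

end
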